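(* Let $r\ge 2$ and, for $1\le j\le r$, let $(\alpha^{[j]}_{h})_{h\in\mathbb{N}}$ be sequences of positive reals with $\alpha^{[j]}_h\neq\alpha^{[j]}_\ell$ for $1\le h<\ell<\infty$. In the $r$-type urn model II with these weights, started from $\mathbf{n}=(n_1,\dots,n_r)$ with all $n_j\ge1$, let $\mathbf{X}_{\mathbf{n}}=(X^{[1]}_{\mathbf{n}},\dots,X^{[r-1]}_{\mathbf{n}})$. Then for all $\mathbf{k}=(k_1,\dots,k_{r-1})$ with $1\le k_j\le n_j$, \[ \mathbb{P}\{\mathbf{X}_{\mathbf{n}}=\mathbf{k}\}=\sum_{\ell_1=k_1}^{n_1}\cdots\sum_{\ell_{r-1}=k_{r-1}}^{n_{r-1}}\frac{\Big(\prod_{j=1}^{r-1}\alpha^{[j]}_{k_j}\Big)\prod_{j=1}^{r-1}\big(\alpha^{[j]}_{\ell_j}\big)^{n_j-k_j+n_r-1}}{\prod_{f=1}^{n_r}\Big(\prod_{j=1}^{r-1}\alpha^{[j]}_{\ell_j}+\alpha^{[r]}_f\sum_{g=1}^{r-1}\frac{\prod_{j=1}^{r-1}\alpha^{[j]}_{\ell_j}}{\alpha^{[g]}_{\ell_g}}\Big)\prod_{j=1}^{r-1}\prod_{\substack{h_j=k_j\\ h_j\neq\ell_j}}^{n_j}\big(\alpha^{[j]}_{\ell_j}-\alpha^{[j]}_{h_j}\big)}. \]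
   Context: $r$-type urn model II: the urn contains balls of types $1,\dots,r$, initially $n_j$ balls of type $j$. At each step, if the urn contains $n'_j$ balls of type $j$ ($1\le j\le r$), a ball of type $\ell$ is drawn with probability \[ \frac{(1-\delta_{n'_\ell,0})\prod_{j\neq\ell}(\alpha^{[j]}_{n'_j})^{1-\delta_{n'_j,0}}}{\sum_{h=1}^{r}(1-\delta_{n'_h,0})\prod_{j\neq h}(\alpha^{[j]}_{n'_j})^{1-\delta_{n'_j,0}}} \] ($\delta$ the Kronecker delta) and discarded. The process stops when either all type $r$ balls have been drawn or all balls of types $1,\dots,r-1$ have been drawn. $X^{[j]}_{\mathbf{n}}$ is the number of type $j$ balls in the urn when the process stops. Empty products equal $1$. *)

theory Defs
  imports Complex_Main "HOL-Library.FuncSet"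
begin

text \<open>States of the urn: m :: nat \<Rightarrow> nat, m j = number of balls of type j (1 \<le> j \<le> r).
  Weights: \<alpha> j h = alpha^[j]_h.\<close>

definition urn_weight :: "nat \<Rightarrow> (nat \<Rightarrow> nat \<Rightarrow> real) \<Rightarrow> (nat \<Rightarrow> nat) \<Rightarrow> nat \<Rightarrow> real" where
  "urn_weight r \<alpha> m l =
     (if m l = 0 then 0
      else (\<Prod>j\<in>{1..r} - {l}. (if m j = 0 then 1 else \<alpha> j (m j))))"

definition urn_draw_prob :: "nat \<Rightarrow> (nat \<Rightarrow> nat \<Rightarrow> real) \<Rightarrow> (nat \<Rightarrow> nat) \<Rightarrow> nat \<Rightarrow> real" where
  "urn_draw_prob r \<alpha> m l = urn_weight r \<alpha> m l / (\<Sum>h\<in>{1..r}. urn_weight r \<alpha> m h)"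

definition urn_stopped :: "nat \<Rightarrow> (nat \<Rightarrow> nat) \<Rightarrow> bool" where
  "urn_stopped r m \<longleftrightarrow> m r = 0 \<or> (\<forall>j\<in>{1..<r}. m j = 0)"

text \<open>Running with N = total number of balls always reaches the stopping time.\<close>

primrec urn_prob :: "nat \<Rightarrow> nat \<Rightarrow> (nat \<Rightarrow> nat \<Rightarrow> real) \<Rightarrow> (nat \<Rightarrow> nat) \<Rightarrow> (nat \<Rightarrow> nat) \<Rightarrow> real" where
  "urn_prob 0 r \<alpha> m k = (if \<forall>j\<in>{1..<r}. m j = k j then 1 else 0)"
| "urn_prob (Suc N) r \<alpha> m k =
     (if urn_stopped r m then (if \<forall>j\<in>{1..<r}. m j = k j then 1 else 0)
      else (\<Sum>l\<in>{1..r}. urn_draw_prob r \<alpha> m l * urn_prob N r \<alpha> (m(l := m l - 1)) k))"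

definition urnII_prob :: "nat \<Rightarrow> (nat \<Rightarrow> nat \<Rightarrow> real) \<Rightarrow> (nat \<Rightarrow> nat) \<Rightarrow> (nat \<Rightarrow> nat) \<Rightarrow> real" where
  "urnII_prob r \<alpha> n k = urn_prob (\<Sum>j\<in>{1..r}. n j) r \<alpha> n k"

end

theory Submission
  imports Defs
begin

text \<open>
  With reciprocal weights \<open>b\<^sub>j(h) = 1 / \<alpha>\<^sub>j(h)\<close>, from a state \<open>m\<close> with all \<open>m\<^sub>j > 0\<close> a ball
  of type \<open>i\<close> is drawn with probability proportional to \<open>b\<^sub>i(m\<^sub>i)\<close>. Hence the probability,
  as a function of the current state, is determined by the first-step recurrence
  \<open>(\<Sum>\<^sub>i b\<^sub>i(m\<^sub>i)) F(m) = \<Sum>\<^sub>i b\<^sub>i(m\<^sub>i) F(m - e\<^sub>i)\<close> together with its values at stopped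
  states. The closed form is a sum over \<open>l \<in> \<Prod>\<^sub>j [k\<^sub>j, m\<^sub>j]\<close> of products of Lagrange
  coefficients times \<open>\<Prod>\<^sub>f b\<^sub>r(f) / (b\<^sub>r(f) + \<Sum>\<^sub>g b\<^sub>g(l\<^sub>g))\<close>, and it satisfies the
  recurrence term by term: removing a ball of type \<open>j < r\<close> multiplies the term by
  \<open>(b\<^sub>j(m\<^sub>j) - b\<^sub>j(l\<^sub>j)) / b\<^sub>j(m\<^sub>j)\<close>, removing a ball of type \<open>r\<close> by
  \<open>(b\<^sub>r(m\<^sub>r) + \<Sum>\<^sub>g b\<^sub>g(l\<^sub>g)) / b\<^sub>r(m\<^sub>r)\<close>, and these factors add up to \<open>\<Sum>\<^sub>i b\<^sub>i(m\<^sub>i)\<close>.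
  When \<open>m\<^sub>r = 0\<close> the closed form factors into sums of Lagrange coefficients, which vanish by
  \<open>\<Sum>\<^sub>l 1 / \<Prod>\<^sub>h\<^sub>\<noteq>\<^sub>l (x\<^sub>h - x\<^sub>l) = 0\<close> unless the node set is a single point, i.e. unless
  \<open>m\<^sub>j = k\<^sub>j\<close>. Substituting \<open>b = 1/\<alpha>\<close> back gives the stated formula.
\<close>

lemma inj_on_inverse_divide:
  fixes f :: "'a \<Rightarrow> 'b::field"
  shows "inj_on (\<lambda>h. 1 / f h) A \<longleftrightarrow> inj_on f A"
  by (simp add: inj_on_def)

lemma power_div_mult_power:
  fixes a :: "'a::field"
  assumes "a \<noteq> 0" "1 \<le> q"
  shows "a ^ p / a * a ^ q = a ^ (p + q - 1)"
proof -
  obtain q' where "q = Suc q'"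
    using assms(2) by (metis Suc_le_D One_nat_def)
  then show ?thesis
    using assms(1) by (simp add: power_add)
qed

lemma prod_inverse_ratio:
  fixes x :: "'a \<Rightarrow> real"
  assumes "\<And>f. f \<in> F \<Longrightarrow> 0 < x f" "0 < A" "0 \<le> c"
  shows "(\<Prod>f\<in>F. (1 / x f) / (1 / x f + c)) = A ^ card F / (\<Prod>f\<in>F. A + x f * (A * c))"
proof -
  have "(\<Prod>f\<in>F. (1 / x f) / (1 / x f + c)) = (\<Prod>f\<in>F. A / (A + x f * (A * c)))"
  proof (rule prod.cong [OF refl])
    fix f assume "f \<in> F"
    then have "0 < x f"
      using assms(1) by blast
    then have "0 < 1 + c * x f"
      using \<open>0 \<le> c\<close> by (simp add: add_pos_nonneg)
    then have "(1 / x f) / (1 / x f + c) = 1 / (1 + c * x f)"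
      using \<open>0 < x f\<close> by (simp add: field_simps)
    moreover have "A + x f * (A * c) = A * (1 + c * x f)"
      by (simp add: algebra_simps)
    ultimately show "(1 / x f) / (1 / x f + c) = A / (A + x f * (A * c))"
      using \<open>0 < A\<close> by simp
  qed
  then show ?thesis
    by (simp add: prod_dividef)
qed

definition lagrange_sum :: "('a \<Rightarrow> 'b::field) \<Rightarrow> 'a set \<Rightarrow> 'b" where
  "lagrange_sum x S = (\<Sum>l\<in>S. 1 / (\<Prod>h\<in>S - {l}. (x h - x l)))"

lemma lagrange_sum_insert:
  assumes "finite T" "b \<notin> T"
  shows "lagrange_sum x (insert b T) =
    1 / (\<Prod>h\<in>T. (x h - x b)) + (\<Sum>l\<in>T. 1 / ((x b - x l) * (\<Prod>h\<in>T - {l}. (x h - x l))))"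
proof -
  have "insert b T - {l} = insert b (T - {l})" if "l \<in> T" for l
    using that assms by auto
  then show ?thesis
    using assms by (simp add: lagrange_sum_def)
qed

lemma lagrange_sum_recurrence:
  assumes "finite T" "a \<notin> T" "b \<notin> T" "a \<noteq> b" and inj: "inj_on x (insert a (insert b T))"
  shows "(x a - x b) * lagrange_sum x (insert a (insert b T)) =
    lagrange_sum x (insert b T) - lagrange_sum x (insert a T)"
proof -
  define P where "P l = (\<Prod>h\<in>T - {l}. (x h - x l))" for l
  define Q where "Q c = (\<Prod>h\<in>T. (x h - x c))" for c
  have ab: "x a - x b \<noteq> 0" "x b - x a \<noteq> 0"
    using inj \<open>a \<noteq> b\<close> by (auto simp: inj_on_def)
  have Q: "Q a \<noteq> 0" "Q b \<noteq> 0"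
    using assms by (auto simp: Q_def inj_on_def)
  have telescoping: "(x a - x b) * (1 / ((x a - x l) * ((x b - x l) * P l)))
      = 1 / ((x b - x l) * P l) - 1 / ((x a - x l) * P l)" if "l \<in> T" for l
  proof -
    have "(u - v) * (1 / (u * (v * p))) = 1 / (v * p) - 1 / (u * p)"
      if "u \<noteq> 0" "v \<noteq> 0" "p \<noteq> 0" for u v p :: 'b
      using that by (simp add: field_simps)
    moreover have "x a - x l \<noteq> 0" "x b - x l \<noteq> 0" "P l \<noteq> 0"
      using assms that by (auto simp: P_def inj_on_def)
    ultimately show ?thesis by fastforce
  qed
  have expand: "lagrange_sum x (insert a (insert b T)) =
      1 / ((x b - x a) * Q a) + 1 / ((x a - x b) * Q b)
      + (\<Sum>l\<in>T. 1 / ((x a - x l) * ((x b - x l) * P l)))"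
  proof -
    have "insert b T - {l} = insert b (T - {l})" if "l \<in> T" for l
      using that assms by auto
    then show ?thesis
      using assms lagrange_sum_insert[of "insert b T" a x]
      by (simp add: P_def Q_def)
  qed
  have "(x a - x b) * lagrange_sum x (insert a (insert b T)) =
      1 / Q b - 1 / Q a + (\<Sum>l\<in>T. 1 / ((x b - x l) * P l) - 1 / ((x a - x l) * P l))"
  proof -
    have "u * (1 / (- u * q)) = - (1 / q)" if "u \<noteq> 0" for u q :: 'b
      using that by simp
    from this[of "x a - x b" "Q a"]
    have "(x a - x b) * (1 / ((x b - x a) * Q a)) = - (1 / Q a)"
      using ab by simp
    moreover have "(x a - x b) * (1 / ((x a - x b) * Q b)) = 1 / Q b"
      using ab by simp
    ultimately show ?thesis
      unfolding expand distrib_left sum_distrib_left using telescoping by simp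
  qed
  also have "\<dots> = lagrange_sum x (insert b T) - lagrange_sum x (insert a T)"
    using assms by (simp add: lagrange_sum_insert P_def Q_def sum_subtractf)
  finally show ?thesis .
qed

lemma lagrange_sum_singleton [simp]: "lagrange_sum x {a} = 1"
  by (simp add: lagrange_sum_def)

lemma lagrange_sum_eq_0:
  assumes "finite S" "inj_on x S" "2 \<le> card S"
  shows "lagrange_sum x S = 0"
  using assms
proof (induction "card S" arbitrary: S rule: less_induct)
  case less
  obtain a b where ab: "a \<in> S" "b \<in> S" "a \<noteq> b"
    using less.prems by (metis card_le_Suc0_iff_eq not_less_eq_eq numeral_2_eq_2)
  define T where "T = S - {a, b}"
  have S: "S = insert a (insert b T)" and T: "finite T" "a \<notin> T" "b \<notin> T"
    using ab less.prems(1) by (auto simp: T_def)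
  have "lagrange_sum x (insert b T) = lagrange_sum x (insert a T)"
  proof (cases "T = {}")
    case False
    have "lagrange_sum x (insert c T) = 0" if "c \<in> {a, b}" for c
    proof (rule less.hyps)
      show "card (insert c T) < card S" "finite (insert c T)"
        using that T ab by (auto simp: S card_insert_if)
      show "inj_on x (insert c T)"
        using less.prems(2) that by (auto simp: S intro: inj_on_subset)
      show "2 \<le> card (insert c T)"
        using False that T by (auto simp: card_insert_if Suc_le_eq card_gt_0_iff)
    qed
    then show ?thesis by simp
  qed simp
  moreover have "x a \<noteq> x b"
    using less.prems(2) ab by (auto simp: inj_on_def)
  moreover have "inj_on x (insert a (insert b T))"
    using less.prems(2) by (simp add: S)
  then have "(x a - x b) * lagrange_sum x S = lagrange_sum x (insert b T) - lagrange_sum x (insert a T)"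
    unfolding S by (rule lagrange_sum_recurrence[OF T ab(3)])
  ultimately show ?case
    by simp
qed

definition lagrange_coeff :: "(nat \<Rightarrow> 'a::field) \<Rightarrow> nat \<Rightarrow> nat \<Rightarrow> nat \<Rightarrow> 'a" where
  "lagrange_coeff x k n l = (\<Prod>h\<in>{k<..n}. x h) / (\<Prod>h\<in>{k..n} - {l}. (x h - x l))"

lemma sum_lagrange_coeff:
  assumes "inj_on x {k..n}" "k \<le> n"
  shows "(\<Sum>l\<in>{k..n}. lagrange_coeff x k n l) = (if n = k then 1 else 0)"
proof -
  have "(\<Sum>l\<in>{k..n}. lagrange_coeff x k n l) = (\<Prod>h\<in>{k<..n}. x h) * lagrange_sum x {k..n}"
    by (simp add: lagrange_coeff_def lagrange_sum_def sum_distrib_left)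
  moreover have "n \<noteq> k \<Longrightarrow> lagrange_sum x {k..n} = 0"
    using assms by (intro lagrange_sum_eq_0) auto
  ultimately show ?thesis
    by (auto simp: lagrange_coeff_def)
qed

lemma lagrange_coeff_Suc:
  assumes "k \<le> l" "l \<le> n" "x (Suc n) \<noteq> x l"
  shows "x (Suc n) * lagrange_coeff x k n l = (x (Suc n) - x l) * lagrange_coeff x k (Suc n) l"
proof -
  have "{k<..Suc n} = insert (Suc n) {k<..n}" "{k..Suc n} - {l} = insert (Suc n) ({k..n} - {l})"
    using assms by auto
  then show ?thesis
    using assms by (simp add: lagrange_coeff_def)
qed

lemma lagrange_coeff_inverse:
  fixes a :: "nat \<Rightarrow> 'a::field"
  assumes nz: "\<And>h. h \<in> {k..n} \<Longrightarrow> a h \<noteq> 0" and l: "k \<le> l" "l \<le> n"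
    and inj: "inj_on a {k..n}"
  shows "lagrange_coeff (\<lambda>h. 1 / a h) k n l =
    a k * a l ^ (n - k) / a l / (\<Prod>h\<in>{k..n} - {l}. (a l - a h))"
proof -
  define D where "D = {k..n} - {l}"
  define P where "P = (\<Prod>h\<in>{k<..n}. a h)"
  define Q where "Q = (\<Prod>h\<in>D. (a l - a h))"
  have "P \<noteq> 0" "a k \<noteq> 0" "a l \<noteq> 0"
    using nz l by (auto simp: P_def)
  have "Q \<noteq> 0"
    using inj l by (auto simp: Q_def D_def inj_on_def)
  have prod_D: "(\<Prod>h\<in>D. a h) = a k * P / a l"
  proof -
    have "a l * (\<Prod>h\<in>D. a h) = (\<Prod>h\<in>{k..n}. a h)"
      using l by (simp add: D_def prod.remove)
    also have "{k..n} = insert k {k<..n}"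
      using l by auto
    then have "(\<Prod>h\<in>{k..n}. a h) = a k * P"
      by (simp add: P_def)
    finally show ?thesis
      using \<open>a l \<noteq> 0\<close> by (simp add: field_simps)
  qed
  have "card D = n - k"
    using l by (simp add: D_def)
  have "(\<Prod>h\<in>D. (1 / a h - 1 / a l)) = (\<Prod>h\<in>D. (a l - a h) / (a h * a l))"
    using nz \<open>a l \<noteq> 0\<close> by (intro prod.cong) (auto simp: D_def field_simps)
  also have "\<dots> = Q / (a k * P / a l * a l ^ (n - k))"
    by (simp add: Q_def prod_dividef prod.distrib prod_D \<open>card D = n - k\<close>)
  finally have "lagrange_coeff (\<lambda>h. 1 / a h) k n l = (1 / P) / (Q / (a k * P / a l * a l ^ (n - k)))"
    by (simp add: lagrange_coeff_def P_def D_def prod_dividef)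
  also have "\<dots> = a k * a l ^ (n - k) / a l / Q"
    using \<open>P \<noteq> 0\<close> \<open>a l \<noteq> 0\<close> \<open>Q \<noteq> 0\<close> by (simp add: field_simps)
  finally show ?thesis
    by (simp add: Q_def D_def)
qed

definition closed_form_term ::
    "nat \<Rightarrow> (nat \<Rightarrow> nat \<Rightarrow> real) \<Rightarrow> (nat \<Rightarrow> nat) \<Rightarrow> (nat \<Rightarrow> nat) \<Rightarrow> (nat \<Rightarrow> nat) \<Rightarrow> real" where
  "closed_form_term r b k m l =
     (\<Prod>j\<in>{1..<r}. lagrange_coeff (b j) (k j) (m j) (l j)) *
     (\<Prod>f\<in>{1..m r}. b r f / (b r f + (\<Sum>g\<in>{1..<r}. b g (l g))))"

definition closed_form ::
    "nat \<Rightarrow> (nat \<Rightarrow> nat \<Rightarrow> real) \<Rightarrow> (nat \<Rightarrow> nat) \<Rightarrow> (nat \<Rightarrow> nat) \<Rightarrow> real" where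
  "closed_form r b k m = (\<Sum>l\<in>(\<Pi>\<^sub>E j\<in>{1..<r}. {k j..m j}). closed_form_term r b k m l)"

lemma closed_form_term_remove_lower:
  assumes i: "i \<in> {1..<r}" and l: "k i \<le> l i" "l i < m i" and ne: "b i (m i) \<noteq> b i (l i)"
  shows "b i (m i) * closed_form_term r b k (m(i := m i - 1)) l =
    (b i (m i) - b i (l i)) * closed_form_term r b k m l"
proof -
  obtain p where p: "m i = Suc p"
    using l by (metis less_imp_Suc_add)
  have coeff: "b i (m i) * lagrange_coeff (b i) (k i) p (l i) =
      (b i (m i) - b i (l i)) * lagrange_coeff (b i) (k i) (m i) (l i)"
    using lagrange_coeff_Suc[of "k i" "l i" p "b i"] l ne by (simp add: p)
  have "(\<Prod>j\<in>{1..<r}. lagrange_coeff (b j) (k j) ((m(i := p)) j) (l j)) =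
      lagrange_coeff (b i) (k i) p (l i) * (\<Prod>j\<in>{1..<r} - {i}. lagrange_coeff (b j) (k j) (m j) (l j))"
    using i by (simp add: prod.remove)
  moreover have "(\<Prod>j\<in>{1..<r}. lagrange_coeff (b j) (k j) (m j) (l j)) =
      lagrange_coeff (b i) (k i) (m i) (l i) * (\<Prod>j\<in>{1..<r} - {i}. lagrange_coeff (b j) (k j) (m j) (l j))"
    using i by (simp add: prod.remove)
  moreover have "i \<noteq> r" using i by simp
  ultimately show ?thesis
    using coeff by (simp add: closed_form_term_def p)
qed

lemma closed_form_remove_lower:
  assumes i: "i \<in> {1..<r}" and "0 < m i" and inj: "inj_on (b i) {k i..m i}"
  shows "b i (m i) * closed_form r b k (m(i := m i - 1)) =
    (\<Sum>l\<in>(\<Pi>\<^sub>E j\<in>{1..<r}. {k j..m j}). (b i (m i) - b i (l i)) * closed_form_term r b k m l)"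
    (is "_ = (\<Sum>l\<in>?S. _)")
proof -
  have lower: "(\<Pi>\<^sub>E j\<in>{1..<r}. {k j..(m(i := m i - 1)) j}) = {l\<in>?S. l i \<noteq> m i}"
    using i \<open>0 < m i\<close> by (force simp: PiE_def Pi_def)
  have "(\<Sum>l\<in>?S. (b i (m i) - b i (l i)) * closed_form_term r b k m l) =
      (\<Sum>l\<in>{l\<in>?S. l i \<noteq> m i}. (b i (m i) - b i (l i)) * closed_form_term r b k m l)"
    by (rule sum.mono_neutral_right) (auto intro: finite_PiE)
  also have "\<dots> = (\<Sum>l\<in>{l\<in>?S. l i \<noteq> m i}. b i (m i) * closed_form_term r b k (m(i := m i - 1)) l)"
  proof (rule sum.cong [OF refl])
    fix l assume "l \<in> {l\<in>?S. l i \<noteq> m i}"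
    then have "k i \<le> l i" "l i < m i"
      using i by (auto simp: PiE_def Pi_def)
    moreover have "b i (m i) \<noteq> b i (l i)"
      using inj calculation by (auto dest: inj_onD)
    ultimately show "(b i (m i) - b i (l i)) * closed_form_term r b k m l =
        b i (m i) * closed_form_term r b k (m(i := m i - 1)) l"
      using closed_form_term_remove_lower[OF i] by simp
  qed
  finally show ?thesis
    unfolding closed_form_def lower sum_distrib_left by (rule sym)
qed

lemma closed_form_term_remove_last:
  assumes "0 < m r" and ne: "b r (m r) + (\<Sum>g\<in>{1..<r}. b g (l g)) \<noteq> 0"
  shows "b r (m r) * closed_form_term r b k (m(r := m r - 1)) l =
    (b r (m r) + (\<Sum>g\<in>{1..<r}. b g (l g))) * closed_form_term r b k m l"
proof -
  obtain p where p: "m r = Suc p"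
    using \<open>0 < m r\<close> gr0_implies_Suc by blast
  have "{1..Suc p} = insert (Suc p) {1..p}" by auto
  then show ?thesis
    using ne by (simp add: closed_form_term_def p)
qed

lemma closed_form_remove_last:
  assumes "0 < m r"
    and ne: "\<And>l. l \<in> (\<Pi>\<^sub>E j\<in>{1..<r}. {k j..m j}) \<Longrightarrow> b r (m r) + (\<Sum>g\<in>{1..<r}. b g (l g)) \<noteq> 0"
  shows "b r (m r) * closed_form r b k (m(r := m r - 1)) =
    (\<Sum>l\<in>(\<Pi>\<^sub>E j\<in>{1..<r}. {k j..m j}).
       (b r (m r) + (\<Sum>g\<in>{1..<r}. b g (l g))) * closed_form_term r b k m l)"
proof -
  have "(\<Pi>\<^sub>E j\<in>{1..<r}. {k j..(m(r := m r - 1)) j}) = (\<Pi>\<^sub>E j\<in>{1..<r}. {k j..m j})"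
    by (intro PiE_cong) auto
  then show ?thesis
    unfolding closed_form_def sum_distrib_left
  proof (intro sum.cong)
    fix l assume "l \<in> (\<Pi>\<^sub>E j\<in>{1..<r}. {k j..m j})"
    from closed_form_term_remove_last[of m r b l k, OF \<open>0 < m r\<close> ne[OF this]]
    show "b r (m r) * closed_form_term r b k (m(r := m r - 1)) l =
        (b r (m r) + (\<Sum>g\<in>{1..<r}. b g (l g))) * closed_form_term r b k m l" .
  qed
qed

lemma closed_form_recurrence:
  assumes "1 \<le> r" and m_pos: "\<And>j. j \<in> {1..r} \<Longrightarrow> 0 < m j"
    and inj: "\<And>j. j \<in> {1..<r} \<Longrightarrow> inj_on (b j) {k j..m j}"
    and ne: "\<And>l. l \<in> (\<Pi>\<^sub>E j\<in>{1..<r}. {k j..m j}) \<Longrightarrow> b r (m r) + (\<Sum>g\<in>{1..<r}. b g (l g)) \<noteq> 0"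
  shows "(\<Sum>i\<in>{1..r}. b i (m i)) * closed_form r b k m =
    (\<Sum>i\<in>{1..r}. b i (m i) * closed_form r b k (m(i := m i - 1)))"
proof -
  let ?S = "\<Pi>\<^sub>E j\<in>{1..<r}. {k j..m j}"
  let ?T = "closed_form_term r b k m"
  have r: "{1..r} = insert r {1..<r}"
    using \<open>1 \<le> r\<close> by auto
  have "(\<Sum>i\<in>{1..r}. b i (m i) * closed_form r b k (m(i := m i - 1))) =
      (\<Sum>l\<in>?S. (b r (m r) + (\<Sum>g\<in>{1..<r}. b g (l g))) * ?T l)
      + (\<Sum>i\<in>{1..<r}. \<Sum>l\<in>?S. (b i (m i) - b i (l i)) * ?T l)"
    unfolding r
    using closed_form_remove_last[of m r k b] closed_form_remove_lower[of _ r m b k] m_pos inj ne \<open>1 \<le> r\<close>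
    by simp
  also have "(\<Sum>i\<in>{1..<r}. \<Sum>l\<in>?S. (b i (m i) - b i (l i)) * ?T l) =
      (\<Sum>l\<in>?S. ((\<Sum>i\<in>{1..<r}. b i (m i)) - (\<Sum>g\<in>{1..<r}. b g (l g))) * ?T l)"
    by (subst sum.swap) (simp add: sum_distrib_right sum_subtractf left_diff_distrib)
  also have "(\<Sum>l\<in>?S. (b r (m r) + (\<Sum>g\<in>{1..<r}. b g (l g))) * ?T l) + \<dots> =
      (\<Sum>l\<in>?S. (\<Sum>i\<in>{1..r}. b i (m i)) * ?T l)"
    unfolding sum.distrib[symmetric] r by (simp add: algebra_simps)
  finally show ?thesis
    unfolding closed_form_def[of r b k m] sum_distrib_left by (rule sym)
qed

lemma closed_form_eq_0:
  assumes "j \<in> {1..<r}" "m j < k j"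
  shows "closed_form r b k m = 0"
proof -
  have "(\<Pi>\<^sub>E j\<in>{1..<r}. {k j..m j}) = {}"
    using assms by (auto simp: PiE_eq_empty_iff)
  then show ?thesis
    by (simp add: closed_form_def)
qed

lemma closed_form_stopped:
  assumes "m r = 0" and "\<And>j. j \<in> {1..<r} \<Longrightarrow> k j \<le> m j \<and> inj_on (b j) {k j..m j}"
  shows "closed_form r b k m = (if \<forall>j\<in>{1..<r}. m j = k j then 1 else 0)"
proof -
  have "closed_form r b k m =
      (\<Sum>l\<in>(\<Pi>\<^sub>E j\<in>{1..<r}. {k j..m j}). \<Prod>j\<in>{1..<r}. lagrange_coeff (b j) (k j) (m j) (l j))"
    using \<open>m r = 0\<close> by (simp add: closed_form_def closed_form_term_def)
  also have "\<dots> = (\<Prod>j\<in>{1..<r}. \<Sum>l\<in>{k j..m j}. lagrange_coeff (b j) (k j) (m j) l)"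
    by (rule prod_sum_PiE [symmetric]) auto
  also have "\<dots> = (\<Prod>j\<in>{1..<r}. if m j = k j then 1 else 0)"
    using assms(2) by (intro prod.cong) (auto simp: sum_lagrange_coeff)
  finally show ?thesis
    by simp
qed

lemma urn_prob_eq_0:
  assumes "j \<in> {1..<r}" "m j < k j"
  shows "urn_prob N r \<alpha> m k = 0"
  using assms(2)
proof (induction N arbitrary: m)
  case (Suc N)
  have "urn_prob N r \<alpha> (m(l := m l - 1)) k = 0" for l
    by (rule Suc.IH) (use Suc.prems in auto)
  moreover have "\<not> (\<forall>j\<in>{1..<r}. m j = k j)"
    using assms(1) Suc.prems by force
  ultimately show ?case
    by auto
qed (use assms in force)

lemma urn_prob_stopped:
  assumes "urn_stopped r m"
  shows "urn_prob N r \<alpha> m k = (if \<forall>j\<in>{1..<r}. m j = k j then 1 else 0)"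
  using assms by (cases N) simp_all

lemma urn_draw_prob_eq:
  assumes "l \<in> {1..r}" and "\<And>j. j \<in> {1..r} \<Longrightarrow> 0 < m j \<and> \<alpha> j (m j) \<noteq> 0"
  shows "urn_draw_prob r \<alpha> m l = (1 / \<alpha> l (m l)) / (\<Sum>h\<in>{1..r}. 1 / \<alpha> h (m h))"
proof -
  define W where "W = (\<Prod>j\<in>{1..r}. \<alpha> j (m j))"
  have "W \<noteq> 0"
    using assms(2) by (simp add: W_def)
  have weight: "urn_weight r \<alpha> m h = W * (1 / \<alpha> h (m h))" if h: "h \<in> {1..r}" for h
  proof -
    have "(if m j = 0 then c else \<alpha> j (m j)) = \<alpha> j (m j)" if "j \<in> {1..r}" for j c
      using assms(2)[OF that] by simp
    then have "urn_weight r \<alpha> m h = (\<Prod>j\<in>{1..r} - {h}. \<alpha> j (m j))"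
      using h assms(2)[OF h] by (simp add: urn_weight_def)
    moreover have "W = \<alpha> h (m h) * (\<Prod>j\<in>{1..r} - {h}. \<alpha> j (m j))"
      using h by (simp add: W_def prod.remove)
    ultimately show ?thesis
      using assms(2) h by simp
  qed
  then have "(\<Sum>h\<in>{1..r}. urn_weight r \<alpha> m h) = W * (\<Sum>h\<in>{1..r}. 1 / \<alpha> h (m h))"
    by (simp add: sum_distrib_left)
  then show ?thesis
    using \<open>W \<noteq> 0\<close> by (simp add: urn_draw_prob_def weight[OF assms(1)])
qed

lemma closed_form_first_step:
  fixes \<alpha> :: "nat \<Rightarrow> nat \<Rightarrow> real"
  defines "b \<equiv> \<lambda>j h. 1 / \<alpha> j h"
  assumes "1 \<le> r"
    and m_pos: "\<And>j. j \<in> {1..r} \<Longrightarrow> 0 < m j"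
    and k_pos: "\<And>j. j \<in> {1..<r} \<Longrightarrow> 1 \<le> k j"
    and \<alpha>_pos: "\<And>j h. j \<in> {1..r} \<Longrightarrow> 1 \<le> h \<Longrightarrow> 0 < \<alpha> j h"
    and inj: "\<And>j. j \<in> {1..<r} \<Longrightarrow> inj_on (\<alpha> j) {k j..m j}"
  shows "closed_form r b k m =
    (\<Sum>l\<in>{1..r}. urn_draw_prob r \<alpha> m l * closed_form r b k (m(l := m l - 1)))"
proof -
  define B where "B = (\<Sum>i\<in>{1..r}. b i (m i))"
  have b_pos: "0 < b j h" if "j \<in> {1..r}" "1 \<le> h" for j h
    using \<alpha>_pos[OF that] by (simp add: b_def)
  have "0 < B"
    unfolding B_def using \<open>1 \<le> r\<close> m_pos by (intro sum_pos b_pos) (auto simp: Suc_le_eq)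
  have "b r (m r) + (\<Sum>g\<in>{1..<r}. b g (l g)) \<noteq> 0"
    if "l \<in> (\<Pi>\<^sub>E j\<in>{1..<r}. {k j..m j})" for l
  proof -
    have "0 \<le> b g (l g)" if "g \<in> {1..<r}" for g
      using b_pos[of g "l g"] k_pos[OF that] \<open>l \<in> _\<close> that by (force simp: PiE_def Pi_def)
    moreover have "0 < b r (m r)"
      using b_pos \<open>1 \<le> r\<close> m_pos by (simp add: Suc_le_eq)
    ultimately show ?thesis
      by (metis add_pos_nonneg less_irrefl sum_nonneg)
  qed
  then have recurrence:
      "B * closed_form r b k m = (\<Sum>i\<in>{1..r}. b i (m i) * closed_form r b k (m(i := m i - 1)))"
    unfolding B_def using \<open>1 \<le> r\<close> m_pos inj
    by (intro closed_form_recurrence) (auto simp: b_def inj_on_inverse_divide)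
  have "0 < m j \<and> \<alpha> j (m j) \<noteq> 0" if "j \<in> {1..r}" for j
    using m_pos[OF that] \<alpha>_pos[OF that, of "m j"] by simp
  then have "urn_draw_prob r \<alpha> m l = b l (m l) / B" if "l \<in> {1..r}" for l
    using urn_draw_prob_eq[OF that] by (simp add: B_def b_def)
  then have "(\<Sum>l\<in>{1..r}. urn_draw_prob r \<alpha> m l * closed_form r b k (m(l := m l - 1))) =
      (\<Sum>l\<in>{1..r}. b l (m l) * closed_form r b k (m(l := m l - 1))) / B"
    by (simp add: sum_divide_distrib)
  also have "\<dots> = closed_form r b k m"
    unfolding recurrence[symmetric] using \<open>0 < B\<close> by simp
  finally show ?thesis ..
qed

lemma urn_prob_eq_closed_form_boundary:
  assumes "m r = 0 \<or> (\<exists>j\<in>{1..<r}. m j < k j)"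
    and inj: "\<And>j. j \<in> {1..<r} \<Longrightarrow> inj_on (b j) {k j..m j}"
  shows "urn_prob N r \<alpha> m k = closed_form r b k m"
proof (cases "\<exists>j\<in>{1..<r}. m j < k j")
  case True
  then show ?thesis
    using urn_prob_eq_0 closed_form_eq_0 by metis
next
  case False
  with assms(1) have "m r = 0"
    by blast
  moreover have "closed_form r b k m = (if \<forall>j\<in>{1..<r}. m j = k j then 1 else 0)"
    using False \<open>m r = 0\<close> inj by (intro closed_form_stopped) (auto simp: not_less)
  ultimately show ?thesis
    by (simp add: urn_stopped_def urn_prob_stopped)
qed

lemma urn_prob_eq_closed_form:
  fixes \<alpha> :: "nat \<Rightarrow> nat \<Rightarrow> real"
  defines "b \<equiv> \<lambda>j h. 1 / \<alpha> j h"
  assumes "2 \<le> r"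
    and k_pos: "\<And>j. j \<in> {1..<r} \<Longrightarrow> 1 \<le> k j"
    and \<alpha>_pos: "\<And>j h. j \<in> {1..r} \<Longrightarrow> 1 \<le> h \<Longrightarrow> 0 < \<alpha> j h"
    and inj: "\<And>j. j \<in> {1..<r} \<Longrightarrow> inj_on (\<alpha> j) {1..}"
    and "(\<Sum>j\<in>{1..r}. m j) \<le> N"
  shows "urn_prob N r \<alpha> m k = closed_form r b k m"
proof -
  have inj_b: "inj_on (b j) {k j..m j}" if "j \<in> {1..<r}" for j m
    using inj[OF that] k_pos[OF that] by (auto simp: b_def inj_on_inverse_divide intro: inj_on_subset)
  show ?thesis
    using \<open>(\<Sum>j\<in>{1..r}. m j) \<le> N\<close>
  proof (induction N arbitrary: m)
    case 0
    then show ?case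
      using \<open>2 \<le> r\<close> by (intro urn_prob_eq_closed_form_boundary[OF _ inj_b]) auto
  next
    case (Suc N)
    show ?case
    proof (cases "m r = 0 \<or> (\<exists>j\<in>{1..<r}. m j < k j)")
      case True
      then show ?thesis
        using inj_b by (rule urn_prob_eq_closed_form_boundary)
    next
      case False
      then have "0 < m r" and k_le: "\<And>j. j \<in> {1..<r} \<Longrightarrow> k j \<le> m j"
        by (auto simp: not_less)
      have m_pos: "0 < m j" if "j \<in> {1..r}" for j
      proof (cases "j = r")
        case False
        with that have "j \<in> {1..<r}" by simp
        with k_pos k_le show ?thesis by (meson le_trans less_one not_le)
      qed (use \<open>0 < m r\<close> in simp)
      then have "\<not> urn_stopped r m"
        using \<open>2 \<le> r\<close> by (auto simp: urn_stopped_def)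
      moreover have "urn_prob N r \<alpha> (m(l := m l - 1)) k = closed_form r b k (m(l := m l - 1))"
        if "l \<in> {1..r}" for l
      proof (rule Suc.IH)
        have "(\<Sum>j\<in>{1..r}. (m(l := m l - 1)) j) < (\<Sum>j\<in>{1..r}. m j)"
          using that m_pos[OF that] by (intro sum_strict_mono_ex1) auto
        then show "(\<Sum>j\<in>{1..r}. (m(l := m l - 1)) j) \<le> N"
          using Suc.prems by linarith
      qed
      ultimately show ?thesis
        using closed_form_first_step[of r m k \<alpha>] m_pos k_pos \<alpha>_pos inj_b \<open>2 \<le> r\<close>
        by (simp add: b_def inj_on_inverse_divide)
    qed
  qed
qed

lemma closed_form_term_inverse:
  fixes \<alpha> :: "nat \<Rightarrow> nat \<Rightarrow> real"
  assumes "1 \<le> r" "1 \<le> n r"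
    and \<alpha>_pos: "\<And>j h. j \<in> {1..r} \<Longrightarrow> 1 \<le> h \<Longrightarrow> 0 < \<alpha> j h"
    and k_pos: "\<And>j. j \<in> {1..<r} \<Longrightarrow> 1 \<le> k j"
    and inj: "\<And>j. j \<in> {1..<r} \<Longrightarrow> inj_on (\<alpha> j) {k j..n j}"
    and l: "l \<in> (\<Pi>\<^sub>E j\<in>{1..<r}. {k j..n j})"
  shows "closed_form_term r (\<lambda>j h. 1 / \<alpha> j h) k n l =
    ((\<Prod>j\<in>{1..<r}. \<alpha> j (k j)) * (\<Prod>j\<in>{1..<r}. \<alpha> j (l j) ^ (n j - k j + n r - 1)))
    / ((\<Prod>f\<in>{1..n r}. (\<Prod>j\<in>{1..<r}. \<alpha> j (l j))
          + \<alpha> r f * (\<Sum>g\<in>{1..<r}. (\<Prod>j\<in>{1..<r}. \<alpha> j (l j)) / \<alpha> g (l g)))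
       * (\<Prod>j\<in>{1..<r}. \<Prod>h\<in>{k j..n j} - {l j}. (\<alpha> j (l j) - \<alpha> j h)))"
proof -
  define A where "A = (\<Prod>j\<in>{1..<r}. \<alpha> j (l j))"
  define c where "c = (\<Sum>g\<in>{1..<r}. 1 / \<alpha> g (l g))"
  define D where "D = (\<Prod>f\<in>{1..n r}. A + \<alpha> r f * (A * c))"
  define Q where "Q j = (\<Prod>h\<in>{k j..n j} - {l j}. (\<alpha> j (l j) - \<alpha> j h))" for j
  define X where "X j = \<alpha> j (k j) * (\<alpha> j (l j) ^ (n j - k j) / \<alpha> j (l j))" for j
  have l_range: "k j \<le> l j" "l j \<le> n j" if "j \<in> {1..<r}" for j
    using l that by (auto simp: PiE_def Pi_def)
  have \<alpha>_l_pos: "0 < \<alpha> j (l j)" if "j \<in> {1..<r}" for j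
    using \<alpha>_pos k_pos[OF that] l_range[OF that] that by force
  have "0 < A"
    unfolding A_def using \<alpha>_l_pos by (intro prod_pos) auto
  have "0 \<le> c"
    unfolding c_def using \<alpha>_l_pos by (intro sum_nonneg) (metis less_imp_le zero_le_divide_1_iff)
  have coeff: "lagrange_coeff (\<lambda>h. 1 / \<alpha> j h) (k j) (n j) (l j) = X j / Q j" if "j \<in> {1..<r}" for j
  proof -
    have "\<alpha> j h \<noteq> 0" if "h \<in> {k j..n j}" for h
      using \<alpha>_pos[of j h] k_pos[OF \<open>j \<in> {1..<r}\<close>] \<open>j \<in> {1..<r}\<close> that by simp
    from lagrange_coeff_inverse[OF this l_range[OF that] inj[OF that]] show ?thesis
      by (simp add: X_def Q_def)
  qed
  have ratio: "(\<Prod>f\<in>{1..n r}. (1 / \<alpha> r f) / (1 / \<alpha> r f + c)) = A ^ n r / D"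
    using prod_inverse_ratio[OF _ \<open>0 < A\<close> \<open>0 \<le> c\<close>, of "{1..n r}" "\<alpha> r"] \<alpha>_pos \<open>1 \<le> r\<close>
    by (simp add: D_def)
  have "closed_form_term r (\<lambda>j h. 1 / \<alpha> j h) k n l = (\<Prod>j\<in>{1..<r}. X j / Q j) * (A ^ n r / D)"
    using coeff ratio by (simp add: closed_form_term_def c_def)
  also have "\<dots> = (\<Prod>j\<in>{1..<r}. X j * \<alpha> j (l j) ^ n r) / (D * (\<Prod>j\<in>{1..<r}. Q j))"
    by (simp add: A_def prod_dividef prod.distrib prod_power_distrib)
  also have "(\<Prod>j\<in>{1..<r}. X j * \<alpha> j (l j) ^ n r) =
      (\<Prod>j\<in>{1..<r}. \<alpha> j (k j) * \<alpha> j (l j) ^ (n j - k j + n r - 1))"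
  proof (rule prod.cong [OF refl])
    fix j assume "j \<in> {1..<r}"
    have "\<alpha> j (l j) ^ (n j - k j) / \<alpha> j (l j) * \<alpha> j (l j) ^ n r = \<alpha> j (l j) ^ (n j - k j + n r - 1)"
      using \<alpha>_l_pos[OF \<open>j \<in> {1..<r}\<close>] \<open>1 \<le> n r\<close> by (intro power_div_mult_power) auto
    then show "X j * \<alpha> j (l j) ^ n r = \<alpha> j (k j) * \<alpha> j (l j) ^ (n j - k j + n r - 1)"
      by (simp only: X_def mult.assoc)
  qed
  finally show ?thesis
    by (simp add: D_def A_def Q_def c_def prod.distrib sum_distrib_left)
qed

theorem theorem4:
  fixes r :: nat and \<alpha> :: "nat \<Rightarrow> nat \<Rightarrow> real" and n k :: "nat \<Rightarrow> nat"
  assumes r2: "r \<ge> 2"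
    and pos: "\<And>j h. 1 \<le> j \<Longrightarrow> j \<le> r \<Longrightarrow> 1 \<le> h \<Longrightarrow> \<alpha> j h > 0"
    and dist: "\<And>j h l. 1 \<le> j \<Longrightarrow> j \<le> r \<Longrightarrow> 1 \<le> h \<Longrightarrow> h < l \<Longrightarrow> \<alpha> j h \<noteq> \<alpha> j l"
    and n_pos: "\<And>j. 1 \<le> j \<Longrightarrow> j \<le> r \<Longrightarrow> n j \<ge> 1"
    and k_range: "\<And>j. 1 \<le> j \<Longrightarrow> j < r \<Longrightarrow> 1 \<le> k j \<and> k j \<le> n j"
  shows "urnII_prob r \<alpha> n k =
    (\<Sum>l\<in>(\<Pi>\<^sub>E j\<in>{1..<r}. {k j..n j}).
       ((\<Prod>j\<in>{1..<r}. \<alpha> j (k j)) * (\<Prod>j\<in>{1..<r}. \<alpha> j (l j) ^ (n j - k j + n r - 1)))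
       / ((\<Prod>f\<in>{1..n r}. (\<Prod>j\<in>{1..<r}. \<alpha> j (l j))
              + \<alpha> r f * (\<Sum>g\<in>{1..<r}. (\<Prod>j\<in>{1..<r}. \<alpha> j (l j)) / \<alpha> g (l g)))
          * (\<Prod>j\<in>{1..<r}. \<Prod>h\<in>{k j..n j} - {l j}. (\<alpha> j (l j) - \<alpha> j h))))"
proof -
  have inj: "inj_on (\<alpha> j) {1..}" if "j \<in> {1..<r}" for j
    using dist that by (intro linorder_inj_onI') auto
  have closed_form: "urnII_prob r \<alpha> n k = closed_form r (\<lambda>j h. 1 / \<alpha> j h) k n"
    unfolding urnII_prob_def using r2 pos k_range inj by (intro urn_prob_eq_closed_form) auto
  show ?thesis
    unfolding closed_form closed_form_def
  proof (rule sum.cong [OF refl], rule closed_form_term_inverse)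
    show "inj_on (\<alpha> j) {k j..n j}" if "j \<in> {1..<r}" for j
      using inj[OF that] k_range[of j] that by (auto intro: inj_on_subset)
  qed (use r2 pos n_pos k_range in auto)
qed

end
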